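(* Let $\mathbf{k}$ be a commutative ring, $n\ge0$, $\mathcal{A}=\mathbf{k}[S_n]$. Fix $\alpha,\beta\in\operatorname{Comp}_n$ and let $\eta_\beta(\alpha)$ be the number of functions $f:[\ell(\beta)]\to[\ell(\alpha)]$ such that for every $j\in[\ell(\alpha)]$ one has $\alpha_j=\sum_{i\in f^{-1}(j)}\beta_i$. Let $Q_\beta:=\sum_{\alpha'\in\operatorname{Comp}_n,\ \alpha'\prec\beta}\mathcal{R}_{\alpha'}$. Then left multiplication by $\mathbf{B}_\alpha$ acts on the quotient $\mathcal{R}_\beta/Q_\beta$ as multiplication by the scalar $\eta_\beta(\alpha)$.
   Context: $S_n$ is the symmetric group on $[n]=\{1,\dots,n\}$, with product $(uw)(i)=u(w(i))$. For $w\in S_n$, $\operatorname{Des}(w)=\{i\in[n-1]: w(i)>w(i+1)\}$. For $I\subseteq[n-1]$, $\mathbf{B}_I=\sum_{w\in S_n,\ \operatorname{Des}(w)\subseteq I} w\in\mathcal{A}$. A composition $\alpha=(\alpha_1,\dots,\alpha_p)$ of $n$ is a finite sequence of positive integers with sum $n$; its length is $\ell(\alpha)=p$; $\operatorname{Comp}_n$ is the set of these. $\operatorname{Set}(\alpha)=\{\alpha_1,\alpha_1+\alpha_2,\dots,\alpha_1+\cdots+\alpha_{p-1}\}$ and $\mathbf{B}_\alpha:=\mathbf{B}_{\operatorname{Set}(\alpha)}$. For compositions $\alpha=(\alpha_1,\dots,\alpha_m)$, $\beta=(\beta_1,\dots,\beta_p)$ of $n$, $\alpha\preceq\beta$ means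 $\alpha$ can be split into $p$ contiguous subsequences whose $j$-th one sums to $\beta_j$; $\alpha\prec\beta$ means $\alpha\preceq\beta$ and $\alpha\ne\beta$. $\mathcal{R}_\beta:=\mathbf{B}_\beta\mathcal{A}$. *)

theory Defs
  imports "HOL-Combinatorics.Permutations" "HOL-Library.FuncSet"
begin

definition Sn :: "nat \<Rightarrow> (nat \<Rightarrow> nat) set" where
  "Sn n = {w. w permutes {1..n}}"

definition alg_elem :: "nat \<Rightarrow> ((nat \<Rightarrow> nat) \<Rightarrow> 'k::comm_ring_1) \<Rightarrow> bool" where
  "alg_elem n a \<longleftrightarrow> (\<forall>w. w \<notin> Sn n \<longrightarrow> a w = 0)"

text \<open>Product in k[S_n]; (uv)(i) = u(v(i)), i.e. the product of u and v is u o v.\<close>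
definition amult :: "nat \<Rightarrow> ((nat \<Rightarrow> nat) \<Rightarrow> 'k::comm_ring_1) \<Rightarrow> ((nat \<Rightarrow> nat) \<Rightarrow> 'k) \<Rightarrow> ((nat \<Rightarrow> nat) \<Rightarrow> 'k)" where
  "amult n a b = (\<lambda>w. \<Sum>u\<in>Sn n. \<Sum>v\<in>Sn n. if u \<circ> v = w then a u * b v else 0)"

definition Des :: "nat \<Rightarrow> (nat \<Rightarrow> nat) \<Rightarrow> nat set" where
  "Des n w = {i \<in> {1..<n}. w i > w (Suc i)}"

definition BI :: "nat \<Rightarrow> nat set \<Rightarrow> ((nat \<Rightarrow> nat) \<Rightarrow> 'k::comm_ring_1)" where
  "BI n I = (\<lambda>w. if w \<in> Sn n \<and> Des n w \<subseteq> I then 1 else 0)"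

definition is_comp :: "nat \<Rightarrow> nat list \<Rightarrow> bool" where
  "is_comp n \<alpha> \<longleftrightarrow> (\<forall>x\<in>set \<alpha>. 0 < x) \<and> sum_list \<alpha> = n"

definition comp_set :: "nat list \<Rightarrow> nat set" where
  "comp_set \<alpha> = {sum_list (take k \<alpha>) | k. 1 \<le> k \<and> k < length \<alpha>}"

definition Bc :: "nat \<Rightarrow> nat list \<Rightarrow> ((nat \<Rightarrow> nat) \<Rightarrow> 'k::comm_ring_1)" where
  "Bc n \<alpha> = BI n (comp_set \<alpha>)"

definition refines :: "nat list \<Rightarrow> nat list \<Rightarrow> bool" where
  "refines \<alpha> \<beta> \<longleftrightarrow> (\<exists>xss. concat xss = \<alpha> \<and> (\<forall>xs\<in>set xss. xs \<noteq> []) \<and> map sum_list xss = \<beta>)"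

definition strictly_refines :: "nat list \<Rightarrow> nat list \<Rightarrow> bool" where
  "strictly_refines \<alpha> \<beta> \<longleftrightarrow> refines \<alpha> \<beta> \<and> \<alpha> \<noteq> \<beta>"

text \<open>eta_beta(alpha), with 0-based indices.\<close>
definition eta :: "nat list \<Rightarrow> nat list \<Rightarrow> nat" where
  "eta \<beta> \<alpha> = card {f \<in> {0..<length \<beta>} \<rightarrow>\<^sub>E {0..<length \<alpha>}.
      \<forall>j<length \<alpha>. \<alpha> ! j = (\<Sum>i\<in>{i. i < length \<beta> \<and> f i = j}. \<beta> ! i)}"

end

theory Submission
  imports Defs "HOL-Library.Product_Lexorder"
begin

text \<open>
  Let \<open>a\<close> and \<open>b\<close> send a position of \<open>[n]\<close> to the index of its block in \<open>\<alpha>\<close> and in \<open>\<beta>\<close>.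
  \<open>Des w \<subseteq> Set(\<alpha>)\<close> says that \<open>w\<close> increases on every block of \<open>\<alpha>\<close>, so \<open>\<B>\<^sub>\<alpha> \<B>\<^sub>\<beta>\<close> counts
  the pairs \<open>(u, v)\<close> increasing on the blocks of \<open>\<alpha>\<close> and of \<open>\<beta>\<close> with \<open>u v = w\<close>. Such a pair is
  determined by \<open>w\<close> and the labelling \<open>g = a \<circ> v\<close>: \<open>v\<close> is the rank of \<open>(g z, w z)\<close> in
  lexicographic order. The labellings that occur are exactly those with the fibre sizes of \<open>a\<close>
  that increase weakly on the blocks of \<open>\<beta>\<close>, and the \<open>w\<close> that occur for \<open>g\<close> are those
  increasing on the blocks of the common refinement of \<open>b\<close> and \<open>g\<close> (Solomon's Mackey formula).
  This refinement is \<open>\<beta>\<close> itself exactly when \<open>g\<close> is constant on the blocks of \<open>\<beta>\<close>, i.e. when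
  \<open>g\<close> is a map from blocks of \<open>\<beta>\<close> to blocks of \<open>\<alpha>\<close> as counted by \<open>\<eta>\<^sub>\<beta>(\<alpha>)\<close>; every other
  labelling contributes \<open>\<B>\<^sub>\<gamma>\<close> for a strict refinement \<open>\<gamma>\<close> of \<open>\<beta>\<close>, and \<open>\<B>\<^sub>\<gamma> \<A> \<subseteq> Q\<^sub>\<beta>\<close>.
\<close>

section \<open>Products in the group algebra\<close>

lemma finite_Sn: "finite (Sn n)"
  unfolding Sn_def by (simp add: finite_permutations)

lemma Sn_comp: "u \<in> Sn n \<Longrightarrow> v \<in> Sn n \<Longrightarrow> u \<circ> v \<in> Sn n"
  unfolding Sn_def by (simp add: permutes_compose)

lemma sum_delta_conj:
  assumes "finite A" "a \<in> A"
  shows "(\<Sum>s\<in>A. if a = s \<and> P s then c else 0) = (if P a then c else 0)"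
proof -
  have "(\<Sum>s\<in>A. if a = s \<and> P s then c else 0) = (\<Sum>s\<in>A. if a = s then if P s then c else 0 else 0)"
    by (rule sum.cong) auto
  then show ?thesis
    using assms by simp
qed

lemma amult_amult_left:
  fixes x y z :: "(nat \<Rightarrow> nat) \<Rightarrow> 'k::comm_ring_1"
  shows "amult n (amult n x y) z w =
     (\<Sum>u\<in>Sn n. \<Sum>v\<in>Sn n. \<Sum>t\<in>Sn n. if u \<circ> v \<circ> t = w then x u * y v * z t else 0)"
proof -
  have "amult n (amult n x y) z w =
      (\<Sum>s\<in>Sn n. \<Sum>t\<in>Sn n. \<Sum>u\<in>Sn n. \<Sum>v\<in>Sn n.
         if u \<circ> v = s \<and> s \<circ> t = w then x u * y v * z t else 0)"
    unfolding amult_def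
    by (intro sum.cong refl)
      (auto simp: sum_distrib_right if_distrib[where f = "\<lambda>a. a * c" for c] intro!: sum.cong)
  also have "\<dots> = (\<Sum>t\<in>Sn n. \<Sum>u\<in>Sn n. \<Sum>v\<in>Sn n. \<Sum>s\<in>Sn n.
         if u \<circ> v = s \<and> s \<circ> t = w then x u * y v * z t else 0)"
    by (subst sum.swap, rule sum.cong[OF refl], subst sum.swap, rule sum.cong[OF refl], rule sum.swap)
  also have "\<dots> = (\<Sum>t\<in>Sn n. \<Sum>u\<in>Sn n. \<Sum>v\<in>Sn n. if u \<circ> v \<circ> t = w then x u * y v * z t else 0)"
    by (intro sum.cong refl) (simp add: sum_delta_conj finite_Sn Sn_comp)
  also have "\<dots> = (\<Sum>u\<in>Sn n. \<Sum>v\<in>Sn n. \<Sum>t\<in>Sn n. if u \<circ> v \<circ> t = w then x u * y v * z t else 0)"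
    by (subst sum.swap, rule sum.cong[OF refl], rule sum.swap)
  finally show ?thesis .
qed

lemma amult_amult_right:
  fixes x y z :: "(nat \<Rightarrow> nat) \<Rightarrow> 'k::comm_ring_1"
  shows "amult n x (amult n y z) w =
     (\<Sum>u\<in>Sn n. \<Sum>v\<in>Sn n. \<Sum>t\<in>Sn n. if u \<circ> v \<circ> t = w then x u * y v * z t else 0)"
proof -
  have "amult n x (amult n y z) w =
      (\<Sum>u\<in>Sn n. \<Sum>s\<in>Sn n. \<Sum>v\<in>Sn n. \<Sum>t\<in>Sn n.
         if v \<circ> t = s \<and> u \<circ> s = w then x u * y v * z t else 0)"
    unfolding amult_def
    by (intro sum.cong refl)
      (auto simp: sum_distrib_left if_distrib[where f = "\<lambda>a. c * a" for c] mult.assoc intro!: sum.cong)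
  also have "\<dots> = (\<Sum>u\<in>Sn n. \<Sum>v\<in>Sn n. \<Sum>t\<in>Sn n. \<Sum>s\<in>Sn n.
         if v \<circ> t = s \<and> u \<circ> s = w then x u * y v * z t else 0)"
    by (rule sum.cong[OF refl], subst sum.swap, rule sum.cong[OF refl], rule sum.swap)
  also have "\<dots> = (\<Sum>u\<in>Sn n. \<Sum>v\<in>Sn n. \<Sum>t\<in>Sn n. if u \<circ> v \<circ> t = w then x u * y v * z t else 0)"
    by (intro sum.cong refl) (simp add: sum_delta_conj finite_Sn Sn_comp o_assoc)
  finally show ?thesis .
qed

lemma amult_assoc: "amult n (amult n x y) z = amult n x (amult n y z)"
  by (rule ext) (simp add: amult_amult_left amult_amult_right)

lemma amult_add_left: "amult n (\<lambda>w. x w + y w) z = (\<lambda>w. amult n x z w + amult n y z w)"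
  unfolding amult_def by (auto simp: sum.distrib[symmetric] distrib_right intro!: sum.cong)

lemma amult_scale_left: "amult n (\<lambda>w. c * x w) z = (\<lambda>w. c * amult n x z w)"
  unfolding amult_def by (auto simp: sum_distrib_left mult.assoc intro!: sum.cong)

lemma amult_scale_right: "amult n x (\<lambda>w. c * z w) = (\<lambda>w. c * amult n x z w)"
  unfolding amult_def by (auto simp: sum_distrib_left mult.left_commute intro!: sum.cong)

lemma amult_sum_left:
  assumes "finite A"
  shows "amult n (\<lambda>w. \<Sum>i\<in>A. x i w) z = (\<lambda>w. \<Sum>i\<in>A. amult n (x i) z w)"
proof
  fix w
  have "amult n (\<lambda>w. \<Sum>i\<in>A. x i w) z w =
      (\<Sum>u\<in>Sn n. \<Sum>v\<in>Sn n. \<Sum>i\<in>A. if u \<circ> v = w then x i u * z v else 0)"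
    unfolding amult_def by (auto simp: sum_distrib_right intro!: sum.cong)
  then show "amult n (\<lambda>w. \<Sum>i\<in>A. x i w) z w = (\<Sum>i\<in>A. amult n (x i) z w)"
    unfolding amult_def by (simp add: sum.swap[of _ A])
qed

section \<open>Descent classes\<close>

definition steps :: "nat \<Rightarrow> (nat \<Rightarrow> 'b) \<Rightarrow> nat set" where
  "steps n c = {i \<in> {1..<n}. c i \<noteq> c (Suc i)}"

definition incr_perms :: "nat \<Rightarrow> (nat \<Rightarrow> 'b) \<Rightarrow> (nat \<Rightarrow> nat) set" where
  "incr_perms n c = {w \<in> Sn n. \<forall>i\<in>{1..n}. \<forall>j\<in>{1..n}. i < j \<longrightarrow> c i = c j \<longrightarrow> w i < w j}"

lemma Des_subset_steps_iff:
  fixes c :: "nat \<Rightarrow> 'b::linorder"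
  assumes c: "mono_on {1..n} c" and w: "w \<in> Sn n"
  shows "Des n w \<subseteq> steps n c \<longleftrightarrow> w \<in> incr_perms n c"
proof
  assume w_incr: "w \<in> incr_perms n c"
  show "Des n w \<subseteq> steps n c"
  proof
    fix i assume "i \<in> Des n w"
    then have i: "i \<in> {1..<n}" "w (Suc i) < w i"
      by (auto simp: Des_def)
    have "c i \<noteq> c (Suc i)"
    proof
      assume "c i = c (Suc i)"
      then have "w i < w (Suc i)"
        using w_incr i(1) unfolding incr_perms_def by auto
      with i(2) show False
        by simp
    qed
    with i(1) show "i \<in> steps n c"
      by (simp add: steps_def)
  qed
next
  assume Des: "Des n w \<subseteq> steps n c"
  have "w i < w j" if ij: "i \<in> {1..n}" "j \<in> {1..n}" "i < j" "c i = c j" for i j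
  proof -
    have "w l \<le> w (Suc l)" if l: "l \<in> {i..<j}" for l
    proof -
      have "c i \<le> c l" "c l \<le> c (Suc l)" "c (Suc l) \<le> c j"
        using l ij(1,2) by (auto intro: mono_onD[OF c])
      then have "l \<notin> steps n c"
        using ij(4) by (auto simp: steps_def)
      then have "l \<notin> Des n w"
        using Des by blast
      then show ?thesis
        using l ij by (auto simp: Des_def)
    qed
    then have "w i \<le> w j"
      by (rule lift_Suc_mono_le_ivl[where N = "{i..<j}"]) (use ij(3) in simp_all)
    moreover have "w i \<noteq> w j"
      using w ij(3) by (auto simp: Sn_def dest: permutes_inj[THEN injD])
    ultimately show "w i < w j"
      by simp
  qed
  with w show "w \<in> incr_perms n c"
    by (simp add: incr_perms_def)
qed

lemma steps_pair_eq_iff: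
  fixes b :: "nat \<Rightarrow> 'b::linorder"
  assumes b: "mono_on {1..n} b"
  shows "steps n (\<lambda>x. (b x, g x)) = steps n b \<longleftrightarrow>
    (\<forall>x\<in>{1..n}. \<forall>y\<in>{1..n}. b x = b y \<longrightarrow> g x = g y)"
proof
  assume steps_eq: "steps n (\<lambda>x. (b x, g x)) = steps n b"
  have "g x = g y" if xy: "x \<in> {1..n}" "y \<in> {1..n}" "x \<le> y" "b x = b y" for x y
  proof -
    have g_step: "g l = g (Suc l)" if l: "l \<in> {x..<y}" for l
    proof -
      have "b x \<le> b l" "b l \<le> b (Suc l)" "b (Suc l) \<le> b y"
        using mono_onD[OF b, of x l] mono_onD[OF b, of l "Suc l"] mono_onD[OF b, of "Suc l" y] l xy
        by auto
      then have "b l = b (Suc l)"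
        using xy(4) by simp
      moreover have "l \<in> {1..<n}"
        using l xy by simp
      ultimately have "l \<notin> steps n (\<lambda>x. (b x, g x))"
        unfolding steps_eq by (simp add: steps_def)
      with \<open>l \<in> {1..<n}\<close> show ?thesis
        by (simp add: steps_def)
    qed
    have "g x = g l" if "x \<le> l" "l \<le> y" for l
      using that
    proof (induction l rule: dec_induct)
      case (step l)
      then show ?case
        using step(1,2,4) by (simp add: g_step)
    qed simp
    then show ?thesis
      using xy(3) by simp
  qed
  then show "\<forall>x\<in>{1..n}. \<forall>y\<in>{1..n}. b x = b y \<longrightarrow> g x = g y"
    by (metis nle_le)
next
  assume g: "\<forall>x\<in>{1..n}. \<forall>y\<in>{1..n}. b x = b y \<longrightarrow> g x = g y"
  have "(b i, g i) \<noteq> (b (Suc i), g (Suc i)) \<longleftrightarrow> b i \<noteq> b (Suc i)" if "i \<in> {1..<n}" for i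
    using g that by auto
  then show "steps n (\<lambda>x. (b x, g x)) = steps n b"
    unfolding steps_def by blast
qed

lemma incr_perms_cong:
  "(\<And>x. x \<in> {1..n} \<Longrightarrow> c x = c' x) \<Longrightarrow> incr_perms n c = incr_perms n c'"
  unfolding incr_perms_def by auto

lemma BI_steps:
  fixes c :: "nat \<Rightarrow> 'b::linorder"
  assumes "mono_on {1..n} c"
  shows "BI n (steps n c) w = (if w \<in> incr_perms n c then 1 else 0)"
  using Des_subset_steps_iff[OF assms] by (auto simp: BI_def incr_perms_def)

lemma amult_BI_steps:
  fixes a :: "nat \<Rightarrow> 'a::linorder" and b :: "nat \<Rightarrow> 'b::linorder"
  assumes "mono_on {1..n} a" "mono_on {1..n} b"
  shows "(amult n (BI n (steps n a)) (BI n (steps n b)) w :: 'k::comm_ring_1) =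
    of_nat (card {(u, v) \<in> incr_perms n a \<times> incr_perms n b. u \<circ> v = w})"
proof -
  let ?P = "\<lambda>(u, v). u \<in> incr_perms n a \<and> v \<in> incr_perms n b \<and> u \<circ> v = w"
  have "(amult n (BI n (steps n a)) (BI n (steps n b)) w :: 'k) =
      (\<Sum>u\<in>Sn n. \<Sum>v\<in>Sn n. if ?P (u, v) then 1 else 0)"
    unfolding amult_def BI_steps[OF assms(1)] BI_steps[OF assms(2)]
    by (intro sum.cong refl) auto
  also have "\<dots> = (\<Sum>p\<in>Sn n \<times> Sn n. if ?P p then 1 else 0)"
    by (simp add: sum.cartesian_product case_prod_beta)
  also have "\<dots> = of_nat (card {p \<in> Sn n \<times> Sn n. ?P p})"
    by (simp add: sum.inter_filter[symmetric] finite_Sn)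
  also have "{p \<in> Sn n \<times> Sn n. ?P p} = {(u, v) \<in> incr_perms n a \<times> incr_perms n b. u \<circ> v = w}"
    by (auto simp: incr_perms_def)
  finally show ?thesis .
qed

lemma card_permutes_preimage:
  assumes "v permutes A"
  shows "card {x \<in> A. P (v x)} = card {y \<in> A. P y}"
proof -
  have "v ` {x \<in> A. P (v x)} = {y \<in> A. P y}"
    using permutes_image[OF assms] by auto
  moreover have "inj_on v {x \<in> A. P (v x)}"
    using permutes_inj_on[OF assms] .
  ultimately show ?thesis
    by (metis card_image)
qed

lemma less_iff_le_card_sublevel:
  fixes a :: "nat \<Rightarrow> 'a::linorder"
  assumes a: "mono_on {1..n} a" and y: "y \<in> {1..n}"
  shows "a y < t \<longleftrightarrow> y \<le> card {x \<in> {1..n}. a x < t}"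
proof
  assume "a y < t"
  have "a x < t" if "x \<in> {1..y}" for x
    using mono_onD[OF a, of x y] that y \<open>a y < t\<close> by auto
  then have "{1..y} \<subseteq> {x \<in> {1..n}. a x < t}"
    using y by auto
  then show "y \<le> card {x \<in> {1..n}. a x < t}"
    using card_mono[of "{x \<in> {1..n}. a x < t}" "{1..y}"] by simp
next
  assume le: "y \<le> card {x \<in> {1..n}. a x < t}"
  show "a y < t"
  proof (rule ccontr)
    assume "\<not> a y < t"
    have "x < y" if x: "x \<in> {1..n}" "a x < t" for x
    proof (rule ccontr)
      assume "\<not> x < y"
      then have "a y \<le> a x"
        using x y by (intro mono_onD[OF a]) auto
      with x(2) \<open>\<not> a y < t\<close> show False
        by simp
    qed
    then have "{x \<in> {1..n}. a x < t} \<subseteq> {1..<y}"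
      by auto
    then have "card {x \<in> {1..n}. a x < t} \<le> y - 1"
      using card_mono[of "{1..<y}" "{x \<in> {1..n}. a x < t}"] by simp
    moreover have "1 \<le> y"
      using y by simp
    ultimately show False
      using le by linarith
  qed
qed

lemma card_sublevel_eq:
  fixes g a :: "'x \<Rightarrow> nat"
  assumes A: "finite A" and fibres: "\<And>k. card {x \<in> A. g x = k} = card {x \<in> A. a x = k}"
  shows "card {x \<in> A. g x < t} = card {x \<in> A. a x < t}"
proof -
  have sublevel: "card {x \<in> A. f x < t} = (\<Sum>k<t. card {x \<in> A. f x = k})" for f :: "'x \<Rightarrow> nat"
  proof -
    have "{x \<in> A. f x < t} = (\<Union>k<t. {x \<in> A. f x = k})"
      by auto
    then show ?thesis
      using A by (auto intro!: card_UN_disjoint)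
  qed
  show ?thesis
    unfolding sublevel fibres ..
qed

lemma factor_through_fibres:
  assumes "\<forall>x\<in>A. \<forall>y\<in>A. h x = h y \<longrightarrow> g x = g y"
  obtains f where "\<And>x. x \<in> A \<Longrightarrow> g x = f (h x)"
proof
  fix x assume x: "x \<in> A"
  then have "\<exists>y. y \<in> A \<and> h y = h x"
    by blast
  then have "(SOME y. y \<in> A \<and> h y = h x) \<in> A \<and> h (SOME y. y \<in> A \<and> h y = h x) = h x"
    by (rule someI_ex)
  with assms x show "g x = g (SOME y. y \<in> A \<and> h y = h x)"
    by metis
qed

definition rank :: "nat \<Rightarrow> (nat \<Rightarrow> 'b::linorder) \<Rightarrow> nat \<Rightarrow> nat" where
  "rank n key z = (if z \<in> {1..n} then card {y \<in> {1..n}. key y \<le> key z} else z)"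

lemma rank_cong:
  assumes "\<And>x. x \<in> {1..n} \<Longrightarrow> key x = key' x"
  shows "rank n key = rank n key'"
proof
  fix z
  have "z \<in> {1..n} \<Longrightarrow> {y \<in> {1..n}. key y \<le> key z} = {y \<in> {1..n}. key' y \<le> key' z}"
    using assms by auto
  then show "rank n key z = rank n key' z"
    by (simp add: rank_def)
qed

lemma rank_less:
  assumes z: "z \<in> {1..n}" "z' \<in> {1..n}" and less: "key z < key z'"
  shows "rank n key z < rank n key z'"
proof -
  have "{y \<in> {1..n}. key y \<le> key z} \<subseteq> {y \<in> {1..n}. key y \<le> key z'}"
    using less by auto
  moreover have "z' \<in> {y \<in> {1..n}. key y \<le> key z'} - {y \<in> {1..n}. key y \<le> key z}"
    using z less by auto
  ultimately have "card {y \<in> {1..n}. key y \<le> key z} < card {y \<in> {1..n}. key y \<le> key z'}"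
    by (intro psubset_card_mono) auto
  then show ?thesis
    using z by (simp add: rank_def)
qed

lemma rank_mem:
  assumes z: "z \<in> {1..n}"
  shows "rank n key z \<in> {1..n}"
proof -
  have "z \<in> {y \<in> {1..n}. key y \<le> key z}"
    using z by simp
  then have "0 < card {y \<in> {1..n}. key y \<le> key z}"
    by (auto simp: card_gt_0_iff)
  moreover have "card {y \<in> {1..n}. key y \<le> key z} \<le> card {1..n}"
    by (rule card_mono) auto
  ultimately show ?thesis
    using z by (simp add: rank_def)
qed

lemma rank_less_iff:
  assumes key: "inj_on key {1..n}" and z: "z \<in> {1..n}" "z' \<in> {1..n}"
  shows "rank n key z < rank n key z' \<longleftrightarrow> key z < key z'"
proof
  assume less: "rank n key z < rank n key z'"
  moreover have "key z \<noteq> key z'"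
  proof
    assume "key z = key z'"
    then have "rank n key z = rank n key z'"
      using z by (simp add: rank_def)
    with less show False
      by simp
  qed
  ultimately show "key z < key z'"
    using rank_less[OF z(2,1), of key] by (auto simp: neq_iff)
qed (rule rank_less[OF z])

lemma rank_permutes:
  assumes key: "inj_on key {1..n}"
  shows "rank n key permutes {1..n}"
proof -
  have inj: "inj_on (rank n key) {1..n}"
  proof (rule inj_onI)
    fix z z' assume z: "z \<in> {1..n}" "z' \<in> {1..n}" and eq: "rank n key z = rank n key z'"
    then have "key z = key z'"
      using rank_less_iff[OF key z] rank_less_iff[OF key z(2,1)] by (auto simp: neq_iff)
    then show "z = z'"
      using key z by (auto dest: inj_onD)
  qed
  moreover have "rank n key ` {1..n} \<subseteq> {1..n}"
    using rank_mem by blast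
  ultimately have "rank n key ` {1..n} = {1..n}"
    by (intro endo_inj_surj) auto
  then have "bij_betw (rank n key) {1..n} {1..n}"
    using inj by (simp add: bij_betw_def)
  then show ?thesis
    by (rule bij_imp_permutes) (auto simp: rank_def)
qed

lemma rank_strict_mono_comp:
  fixes key :: "nat \<Rightarrow> 'b::linorder"
  assumes key: "strict_mono_on {1..n} key" and v: "v permutes {1..n}"
  shows "rank n (\<lambda>z. key (v z)) = v"
proof
  fix z
  show "rank n (\<lambda>z. key (v z)) z = v z"
  proof (cases "z \<in> {1..n}")
    case True
    then have vz: "v z \<in> {1..n}"
      using permutes_in_image[OF v] by simp
    have "rank n (\<lambda>z. key (v z)) z = card {y \<in> {1..n}. key y \<le> key (v z)}"
      using True card_permutes_preimage[OF v, of "\<lambda>y. key y \<le> key (v z)"] by (simp add: rank_def)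
    also have "{y \<in> {1..n}. key y \<le> key (v z)} = {1..v z}"
      using vz strict_mono_on_less_eq[OF key] by auto
    finally show ?thesis
      by simp
  next
    case False
    then show ?thesis
      using permutes_not_in[OF v] by (auto simp: rank_def)
  qed
qed

section \<open>Solomon's Mackey formula\<close>

definition mackey_labellings :: "nat \<Rightarrow> (nat \<Rightarrow> nat) \<Rightarrow> (nat \<Rightarrow> 'b::linorder) \<Rightarrow> (nat \<Rightarrow> nat) set" where
  "mackey_labellings n a b =
     {g \<in> {1..n} \<rightarrow>\<^sub>E a ` {1..n}.
        (\<forall>k. card {x \<in> {1..n}. g x = k} = card {x \<in> {1..n}. a x = k}) \<and>
        mono_on {1..n} (\<lambda>x. (b x, g x))}"

lemma mackey_labelling_mono_on:
  "g \<in> mackey_labellings n a b \<Longrightarrow> mono_on {1..n} (\<lambda>x. (b x, g x))"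
  by (simp add: mackey_labellings_def)

lemma incr_perms_lex_strict_mono:
  fixes a :: "nat \<Rightarrow> 'a::linorder"
  assumes a: "mono_on {1..n} a" and u: "u \<in> incr_perms n a"
  shows "strict_mono_on {1..n} (\<lambda>x. (a x, u x))"
proof (rule strict_mono_onI)
  fix x y assume xy: "x \<in> {1..n}" "y \<in> {1..n}" "x < y"
  then have "a x \<le> a y" "a x = a y \<Longrightarrow> u x < u y"
    using mono_onD[OF a] u by (auto simp: incr_perms_def)
  then show "(a x, u x) < (a y, u y)"
    by (auto simp: le_less)
qed

lemma mackey_labelling_of_pair:
  fixes b :: "nat \<Rightarrow> 'b::linorder"
  assumes a: "mono_on {1..n} a" and b: "mono_on {1..n} b"
    and u: "u \<in> incr_perms n a" and v: "v \<in> incr_perms n b"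
  shows "restrict (a \<circ> v) {1..n} \<in> mackey_labellings n a b"
    and "u \<circ> v \<in> incr_perms n (\<lambda>x. (b x, a (v x)))"
proof -
  have v_perm: "v permutes {1..n}"
    using v by (simp add: incr_perms_def Sn_def)
  have v_in: "v x \<in> {1..n}" if "x \<in> {1..n}" for x
    using that permutes_in_image[OF v_perm] by simp
  have v_incr: "v x < v y" if "x \<in> {1..n}" "y \<in> {1..n}" "x < y" "b x = b y" for x y
    using v that by (auto simp: incr_perms_def)
  have "mono_on {1..n} (\<lambda>x. (b x, a (v x)))"
  proof (rule mono_onI)
    fix x y assume xy: "x \<in> {1..n}" "y \<in> {1..n}" "x \<le> y"
    have "b x \<le> b y"
      using mono_onD[OF b xy] .
    moreover have "a (v x) \<le> a (v y)" if "b x = b y"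
      using xy that v_incr[of x y] v_in by (cases "x = y") (auto intro: mono_onD[OF a])
    ultimately show "(b x, a (v x)) \<le> (b y, a (v y))"
      by (auto simp: le_less)
  qed
  then have "mono_on {1..n} (\<lambda>x. (b x, restrict (a \<circ> v) {1..n} x))"
    by (auto simp: mono_on_def)
  moreover have "card {x \<in> {1..n}. restrict (a \<circ> v) {1..n} x = k} = card {x \<in> {1..n}. a x = k}" for k
  proof -
    have "{x \<in> {1..n}. restrict (a \<circ> v) {1..n} x = k} = {x \<in> {1..n}. a (v x) = k}"
      by auto
    then show ?thesis
      using card_permutes_preimage[OF v_perm, of "\<lambda>y. a y = k"] by simp
  qed
  ultimately show "restrict (a \<circ> v) {1..n} \<in> mackey_labellings n a b"
    using v_in by (auto simp: mackey_labellings_def)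
  have "u \<circ> v \<in> Sn n"
    using u v by (auto simp: incr_perms_def Sn_def permutes_compose)
  moreover have "u (v x) < u (v y)"
    if "x \<in> {1..n}" "y \<in> {1..n}" "x < y" "b x = b y" "a (v x) = a (v y)" for x y
    using u v_incr[OF that(1-4)] v_in that by (auto simp: incr_perms_def)
  ultimately show "u \<circ> v \<in> incr_perms n (\<lambda>x. (b x, a (v x)))"
    by (auto simp: incr_perms_def)
qed

lemma mackey_pair_unique:
  fixes a :: "nat \<Rightarrow> 'a::linorder"
  assumes a: "mono_on {1..n} a"
    and u: "u \<in> incr_perms n a" "u' \<in> incr_perms n a"
    and v: "v \<in> Sn n" "v' \<in> Sn n"
    and comp: "u \<circ> v = u' \<circ> v'" and labels: "\<And>x. x \<in> {1..n} \<Longrightarrow> a (v x) = a (v' x)"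
  shows "u = u'" and "v = v'"
proof -
  have "v = rank n (\<lambda>z. (a (v z), u (v z)))"
    using rank_strict_mono_comp[OF incr_perms_lex_strict_mono[OF a u(1)], of v] v(1)
    by (simp add: Sn_def)
  also have "\<dots> = rank n (\<lambda>z. (a (v' z), u' (v' z)))"
    using labels comp by (intro rank_cong) (simp add: fun_eq_iff)
  also have "\<dots> = v'"
    using rank_strict_mono_comp[OF incr_perms_lex_strict_mono[OF a u(2)], of v'] v(2)
    by (simp add: Sn_def)
  finally show "v = v'" .
  then have "u \<circ> v = u' \<circ> v"
    using comp by simp
  then show "u = u'"
    using v(1) by (metis Sn_def mem_Collect_eq permutes_surj surj_fun_eq)
qed

text \<open>The ranks of the positions labelled \<open>k\<close> fill the fibre of \<open>a\<close> over \<open>k\<close>, because the fibres of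
  the labelling and of the monotone map \<open>a\<close> have the same sizes.\<close>

lemma rank_lex_label:
  fixes a g :: "nat \<Rightarrow> nat" and w :: "nat \<Rightarrow> 'c::linorder"
  assumes a: "mono_on {1..n} a"
    and fibres: "\<And>k. card {x \<in> {1..n}. g x = k} = card {x \<in> {1..n}. a x = k}"
    and z: "z \<in> {1..n}"
  shows "a (rank n (\<lambda>z. (g z, w z)) z) = g z"
proof -
  let ?r = "rank n (\<lambda>z. (g z, w z)) z"
  have r: "?r \<in> {1..n}"
    by (rule rank_mem[OF z])
  have "{y \<in> {1..n}. g y < g z} \<subset> {y \<in> {1..n}. (g y, w y) \<le> (g z, w z)}"
    using z by auto
  then have "card {y \<in> {1..n}. g y < g z} < ?r"
    using z by (simp add: rank_def psubset_card_mono)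
  then have "\<not> a ?r < g z"
    using less_iff_le_card_sublevel[OF a r] card_sublevel_eq[OF _ fibres] by simp
  moreover have "{y \<in> {1..n}. (g y, w y) \<le> (g z, w z)} \<subseteq> {y \<in> {1..n}. g y < Suc (g z)}"
    by auto
  then have "?r \<le> card {y \<in> {1..n}. g y < Suc (g z)}"
    using z by (simp add: rank_def card_mono)
  then have "a ?r < Suc (g z)"
    using less_iff_le_card_sublevel[OF a r] card_sublevel_eq[OF _ fibres] by simp
  ultimately show ?thesis
    by simp
qed

lemma mackey_pair_exists:
  fixes b :: "nat \<Rightarrow> 'b::linorder"
  assumes a: "mono_on {1..n} a" and g: "g \<in> mackey_labellings n a b"
    and w: "w \<in> incr_perms n (\<lambda>x. (b x, g x))"
  obtains u v where "u \<in> incr_perms n a" "v \<in> incr_perms n b" "u \<circ> v = w"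
    "\<And>x. x \<in> {1..n} \<Longrightarrow> a (v x) = g x"
proof -
  have w_perm: "w permutes {1..n}"
    using w by (simp add: incr_perms_def Sn_def)
  define v where "v = rank n (\<lambda>z. (g z, w z))"
  have key: "inj_on (\<lambda>z. (g z, w z)) {1..n}"
    using permutes_inj_on[OF w_perm] by (auto simp: inj_on_def)
  then have v_perm: "v permutes {1..n}"
    unfolding v_def by (rule rank_permutes)
  have g_fibres: "card {x \<in> {1..n}. g x = k} = card {x \<in> {1..n}. a x = k}" for k
    using g by (simp add: mackey_labellings_def)
  have labels: "a (v z) = g z" if "z \<in> {1..n}" for z
    unfolding v_def by (rule rank_lex_label[OF a g_fibres that])
  define u where "u = w \<circ> inv v"
  have uv: "u \<circ> v = w"
    by (simp add: u_def comp_assoc permutes_inv_o(2)[OF v_perm])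
  have "u x < u y" if xy: "x \<in> {1..n}" "y \<in> {1..n}" "x < y" "a x = a y" for x y
  proof -
    define z z' where "z = inv v x" and "z' = inv v y"
    have zz': "z \<in> {1..n}" "z' \<in> {1..n}" "v z = x" "v z' = y"
      using xy(1,2) permutes_in_image[OF permutes_inv[OF v_perm]] permutes_inverses(1)[OF v_perm]
      by (simp_all add: z_def z'_def)
    then have "(g z, w z) < (g z', w z')"
      using rank_less_iff[OF key zz'(1,2)] xy(3) by (simp add: v_def)
    moreover have "g z = g z'"
      using labels zz' xy(4) by metis
    ultimately show ?thesis
      using zz' by (simp add: u_def z_def z'_def)
  qed
  moreover have "u permutes {1..n}"
    unfolding u_def using w_perm permutes_inv[OF v_perm] by (rule permutes_compose[rotated])
  moreover have "v x < v y" if xy: "x \<in> {1..n}" "y \<in> {1..n}" "x < y" "b x = b y" for x y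
  proof -
    have "g x \<le> g y"
      using mono_onD[OF mackey_labelling_mono_on[OF g], of x y] xy by simp
    moreover have "g x = g y \<Longrightarrow> w x < w y"
      using w xy by (auto simp: incr_perms_def)
    ultimately show ?thesis
      using rank_less_iff[OF key xy(1,2)] by (auto simp: v_def le_less)
  qed
  ultimately show ?thesis
    using that[of u v] v_perm uv labels by (simp add: incr_perms_def Sn_def)
qed

lemma card_mackey_pairs:
  fixes b :: "nat \<Rightarrow> 'b::linorder"
  assumes a: "mono_on {1..n} a" and b: "mono_on {1..n} b"
  shows "card {(u, v) \<in> incr_perms n a \<times> incr_perms n b. u \<circ> v = w} =
    card {g \<in> mackey_labellings n a b. w \<in> incr_perms n (\<lambda>x. (b x, g x))}"
    (is "card ?D = card ?T")
proof (rule bij_betw_same_card)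
  let ?label = "\<lambda>(u, v). restrict (a \<circ> v) {1..n}"
  show "bij_betw ?label ?D ?T"
  proof (rule bij_betw_imageI)
    show "inj_on ?label ?D"
    proof (rule inj_onI, clarify)
      fix u v u' v'
      assume uv: "u \<in> incr_perms n a" "v \<in> incr_perms n b" "u' \<in> incr_perms n a" "v' \<in> incr_perms n b"
        and comp: "u' \<circ> v' = u \<circ> v" and labels: "restrict (a \<circ> v) {1..n} = restrict (a \<circ> v') {1..n}"
      have "a (v x) = a (v' x)" if "x \<in> {1..n}" for x
        using fun_cong[OF labels, of x] that by simp
      moreover have "v \<in> Sn n" "v' \<in> Sn n"
        using uv by (simp_all add: incr_perms_def)
      ultimately show "u = u' \<and> v = v'"
        using mackey_pair_unique[OF a uv(1,3)] comp by metis
    qed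
    have "incr_perms n (\<lambda>x. (b x, restrict (a \<circ> v) {1..n} x)) = incr_perms n (\<lambda>x. (b x, a (v x)))" for v
      by (rule incr_perms_cong) simp
    then show "?label ` ?D = ?T"
    proof (intro equalityI subsetI)
      fix g assume g: "g \<in> ?T"
      then obtain u v where uv: "u \<in> incr_perms n a" "v \<in> incr_perms n b" "u \<circ> v = w"
        and labels: "\<And>x. x \<in> {1..n} \<Longrightarrow> a (v x) = g x"
        using mackey_pair_exists[OF a] by blast
      have "g = restrict (a \<circ> v) {1..n}"
        using g labels by (auto simp: mackey_labellings_def fun_eq_iff PiE_def extensional_def)
      with uv show "g \<in> ?label ` ?D"
        by force
    qed (use mackey_labelling_of_pair[OF a b] in auto)
  qed
qed

lemma finite_mackey_labellings: "finite (mackey_labellings n a b)"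
proof (rule finite_subset)
  show "mackey_labellings n a b \<subseteq> {1..n} \<rightarrow>\<^sub>E a ` {1..n}"
    by (auto simp: mackey_labellings_def)
qed (simp add: finite_PiE)

lemma BI_steps_mult_BI_steps:
  fixes b :: "nat \<Rightarrow> 'b::linorder"
  assumes a: "mono_on {1..n} a" and b: "mono_on {1..n} b"
  shows "(amult n (BI n (steps n a)) (BI n (steps n b)) :: _ \<Rightarrow> 'k::comm_ring_1) =
    (\<lambda>w. \<Sum>g\<in>mackey_labellings n a b. BI n (steps n (\<lambda>x. (b x, g x))) w)"
proof
  fix w
  have "(amult n (BI n (steps n a)) (BI n (steps n b)) w :: 'k) =
      of_nat (card {g \<in> mackey_labellings n a b. w \<in> incr_perms n (\<lambda>x. (b x, g x))})"
    unfolding amult_BI_steps[OF a b] card_mackey_pairs[OF a b] ..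
  also have "\<dots> = (\<Sum>g\<in>mackey_labellings n a b. if w \<in> incr_perms n (\<lambda>x. (b x, g x)) then 1 else 0)"
    by (simp add: sum.inter_filter[symmetric] finite_mackey_labellings)
  also have "\<dots> = (\<Sum>g\<in>mackey_labellings n a b. BI n (steps n (\<lambda>x. (b x, g x))) w)"
    by (intro sum.cong refl) (simp add: BI_steps[OF mackey_labelling_mono_on])
  finally show "(amult n (BI n (steps n a)) (BI n (steps n b)) w :: 'k) = \<dots>" .
qed

section \<open>Compositions and their blocks\<close>

lemma ex_step_crossing:
  fixes f :: "nat \<Rightarrow> nat"
  assumes "f 0 < x" "x \<le> f m"
  shows "\<exists>k<m. f k < x \<and> x \<le> f (Suc k)"
  using assms(2)
proof (induction m)
  case 0
  with assms(1) show ?case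
    by simp
next
  case (Suc m)
  then show ?case
    by (cases "x \<le> f m") (auto intro: less_SucI)
qed

abbreviation partial_sum :: "nat list \<Rightarrow> nat \<Rightarrow> nat" where
  "partial_sum \<alpha> k \<equiv> sum_list (take k \<alpha>)"

lemma partial_sum_Suc: "k < length \<alpha> \<Longrightarrow> partial_sum \<alpha> (Suc k) = partial_sum \<alpha> k + \<alpha> ! k"
  by (simp add: take_Suc_conv_app_nth)

lemma strict_mono_on_partial_sum:
  assumes "is_comp n \<alpha>"
  shows "strict_mono_on {0..length \<alpha>} (partial_sum \<alpha>)"
proof (rule strict_mono_onI)
  fix k k' assume k': "k' \<in> {0..length \<alpha>}" and "k < k'"
  have step: "partial_sum \<alpha> l < partial_sum \<alpha> (Suc l)" if "l \<in> {0..<length \<alpha>}" for l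
    using assms that by (simp add: partial_sum_Suc is_comp_def)
  show "partial_sum \<alpha> k < partial_sum \<alpha> k'"
    by (rule lift_Suc_mono_less_ivl[where N = "{0..<length \<alpha>}" and f = "partial_sum \<alpha>",
          OF step \<open>k < k'\<close>])
      (use k' in auto)
qed

lemma comp_set_eq_image: "comp_set \<alpha> = partial_sum \<alpha> ` {1..<length \<alpha>}"
  unfolding comp_set_def by auto

lemma finite_comp_set: "finite (comp_set \<alpha>)"
  by (simp add: comp_set_eq_image)

lemma comp_set_subset:
  assumes "is_comp n \<alpha>"
  shows "comp_set \<alpha> \<subseteq> {1..<n}"
proof
  fix s assume "s \<in> comp_set \<alpha>"
  then obtain k where k: "k \<in> {1..<length \<alpha>}" "s = partial_sum \<alpha> k"
    by (auto simp: comp_set_eq_image)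
  have "partial_sum \<alpha> 0 < partial_sum \<alpha> k" "partial_sum \<alpha> k < partial_sum \<alpha> (length \<alpha>)"
    using k(1) strict_mono_onD[OF strict_mono_on_partial_sum[OF assms], of 0 k]
      strict_mono_onD[OF strict_mono_on_partial_sum[OF assms], of k "length \<alpha>"]
    by simp_all
  then show "s \<in> {1..<n}"
    using assms k(2) by (simp add: is_comp_def)
qed

text \<open>\<open>block_index (comp_set \<alpha>) x\<close> is the 0-based index of the part of \<open>\<alpha>\<close> containing \<open>x\<close>.\<close>

definition block_index :: "nat set \<Rightarrow> nat \<Rightarrow> nat" where
  "block_index I i = card {s \<in> I. s < i}"

lemma mono_block_index: "finite I \<Longrightarrow> mono (block_index I)"
  unfolding block_index_def by (intro monoI card_mono) auto

lemma block_index_Suc: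
  "finite I \<Longrightarrow> block_index I (Suc i) = block_index I i + (if i \<in> I then 1 else 0)"
proof -
  have "{s \<in> I. s < Suc i} = (if i \<in> I then insert i {s \<in> I. s < i} else {s \<in> I. s < i})"
    by (auto simp: less_Suc_eq)
  then show "finite I \<Longrightarrow> ?thesis"
    by (simp add: block_index_def)
qed

lemma steps_block_index:
  assumes "finite I" "I \<subseteq> {1..<n}"
  shows "steps n (block_index I) = I"
  using assms by (auto simp: steps_def block_index_Suc)

lemma block_index_comp_set:
  assumes \<alpha>: "is_comp n \<alpha>" and k: "k < length \<alpha>"
    and x: "partial_sum \<alpha> k < x" "x \<le> partial_sum \<alpha> (Suc k)"
  shows "block_index (comp_set \<alpha>) x = k"
proof -
  note less_iff = strict_mono_on_less[OF strict_mono_on_partial_sum[OF \<alpha>]]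
  have "{s \<in> comp_set \<alpha>. s < x} = partial_sum \<alpha> ` {1..k}"
  proof -
    have "partial_sum \<alpha> l < x \<longleftrightarrow> l \<le> k" if "l \<in> {1..<length \<alpha>}" for l
      using that k x less_iff[of l k] less_iff[of k l] less_iff[of "Suc k" l] less_iff[of l "Suc k"]
      by (cases "l \<le> k"; cases "l = Suc k") auto
    then show ?thesis
      using k by (force simp: comp_set_eq_image)
  qed
  moreover have "inj_on (partial_sum \<alpha>) {1..k}"
    using inj_on_subset[OF strict_mono_on_imp_inj_on[OF strict_mono_on_partial_sum[OF \<alpha>]]] k
    by auto
  ultimately show ?thesis
    by (simp add: block_index_def card_image)
qed

lemma block_index_fibre:
  assumes \<alpha>: "is_comp n \<alpha>" and k: "k < length \<alpha>"
  shows "{x \<in> {1..n}. block_index (comp_set \<alpha>) x = k} = {partial_sum \<alpha> k<..partial_sum \<alpha> (Suc k)}"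
proof
  show "{x \<in> {1..n}. block_index (comp_set \<alpha>) x = k} \<subseteq> {partial_sum \<alpha> k<..partial_sum \<alpha> (Suc k)}"
  proof
    fix x assume "x \<in> {x \<in> {1..n}. block_index (comp_set \<alpha>) x = k}"
    then have x: "x \<in> {1..n}" and "block_index (comp_set \<alpha>) x = k"
      by auto
    moreover obtain k' where "k' < length \<alpha>" "partial_sum \<alpha> k' < x" "x \<le> partial_sum \<alpha> (Suc k')"
      using ex_step_crossing[of "partial_sum \<alpha>" x "length \<alpha>"] x \<alpha> by (auto simp: is_comp_def)
    ultimately show "x \<in> {partial_sum \<alpha> k<..partial_sum \<alpha> (Suc k)}"
      using block_index_comp_set[OF \<alpha>] by force
  qed
  have "partial_sum \<alpha> (Suc k) \<le> n"
    using strict_mono_on_less_eq[OF strict_mono_on_partial_sum[OF \<alpha>], of "Suc k" "length \<alpha>"] k \<alpha>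
    by (simp add: is_comp_def)
  then show "{partial_sum \<alpha> k<..partial_sum \<alpha> (Suc k)} \<subseteq> {x \<in> {1..n}. block_index (comp_set \<alpha>) x = k}"
    using block_index_comp_set[OF \<alpha> k] by auto
qed

lemma card_block_index_fibre:
  assumes "is_comp n \<alpha>" "k < length \<alpha>"
  shows "card {x \<in> {1..n}. block_index (comp_set \<alpha>) x = k} = \<alpha> ! k"
  using block_index_fibre[OF assms] partial_sum_Suc[OF assms(2)] by simp

lemma block_index_comp_set_less:
  assumes \<alpha>: "is_comp n \<alpha>" and x: "x \<in> {1..n}"
  shows "block_index (comp_set \<alpha>) x < length \<alpha>"
  using ex_step_crossing[of "partial_sum \<alpha>" x "length \<alpha>"] block_index_comp_set[OF \<alpha>] x \<alpha>
  by (force simp: is_comp_def)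

lemma block_index_comp_set_image:
  assumes \<beta>: "is_comp n \<beta>"
  shows "block_index (comp_set \<beta>) ` {1..n} = {0..<length \<beta>}"
proof
  show "block_index (comp_set \<beta>) ` {1..n} \<subseteq> {0..<length \<beta>}"
    using block_index_comp_set_less[OF \<beta>] by auto
  show "{0..<length \<beta>} \<subseteq> block_index (comp_set \<beta>) ` {1..n}"
  proof
    fix i assume i: "i \<in> {0..<length \<beta>}"
    then have "card {x \<in> {1..n}. block_index (comp_set \<beta>) x = i} \<noteq> 0"
      using card_block_index_fibre[OF \<beta>] \<beta> by (auto simp: is_comp_def)
    then show "i \<in> block_index (comp_set \<beta>) ` {1..n}"
      by (metis (mono_tags, lifting) card.empty empty_Collect_eq image_eqI)
  qed
qed

lemma card_block_index_preimage:
  assumes \<beta>: "is_comp n \<beta>"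
  shows "card {x \<in> {1..n}. f (block_index (comp_set \<beta>) x) = k} =
    (\<Sum>i\<in>{i. i < length \<beta> \<and> f i = k}. \<beta> ! i)"
proof -
  have "{x \<in> {1..n}. f (block_index (comp_set \<beta>) x) = k} =
      (\<Union>i\<in>{i. i < length \<beta> \<and> f i = k}. {x \<in> {1..n}. block_index (comp_set \<beta>) x = i})"
    using block_index_comp_set_less[OF \<beta>] by auto
  also have "card \<dots> = (\<Sum>i\<in>{i. i < length \<beta> \<and> f i = k}. card {x \<in> {1..n}. block_index (comp_set \<beta>) x = i})"
    by (rule card_UN_disjoint) auto
  also have "\<dots> = (\<Sum>i\<in>{i. i < length \<beta> \<and> f i = k}. \<beta> ! i)"
    using card_block_index_fibre[OF \<beta>] by simp
  finally show ?thesis .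
qed

lemma card_block_index_fibre_if:
  assumes "is_comp n \<alpha>"
  shows "card {x \<in> {1..n}. block_index (comp_set \<alpha>) x = k} = (if k < length \<alpha> then \<alpha> ! k else 0)"
proof (cases "k < length \<alpha>")
  case False
  then have "{x \<in> {1..n}. block_index (comp_set \<alpha>) x = k} = {}"
    using block_index_comp_set_less[OF assms] by fastforce
  with False show ?thesis
    by simp
next
  case True
  then show ?thesis
    using card_block_index_fibre[OF assms True] by simp
qed

lemma Bc_eq_BI_steps:
  assumes "is_comp n \<alpha>"
  shows "Bc n \<alpha> = BI n (steps n (block_index (comp_set \<alpha>)))"
  using steps_block_index[OF finite_comp_set comp_set_subset[OF assms]] by (simp add: Bc_def)

lemma mono_on_block_index: "mono_on A (block_index (comp_set \<alpha>))"
  by (rule mono_imp_mono_on[OF mono_block_index[OF finite_comp_set]])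

lemma comp_set_append:
  assumes "xs \<noteq> []" "ys \<noteq> []"
  shows "comp_set (xs @ ys) = comp_set xs \<union> insert (sum_list xs) ((+) (sum_list xs) ` comp_set ys)"
proof (intro equalityI subsetI)
  fix s assume "s \<in> comp_set (xs @ ys)"
  then obtain k where k: "1 \<le> k" "k < length xs + length ys" "s = partial_sum (xs @ ys) k"
    by (auto simp: comp_set_eq_image)
  consider "k < length xs" | "k = length xs" | "length xs < k"
    by linarith
  then show "s \<in> comp_set xs \<union> insert (sum_list xs) ((+) (sum_list xs) ` comp_set ys)"
  proof cases
    case 1
    with k show ?thesis
      by (auto simp: comp_set_eq_image)
  next
    case 2
    with k show ?thesis
      by simp
  next
    case 3
    with k have "k - length xs \<in> {1..<length ys}" "s = sum_list xs + partial_sum ys (k - length xs)"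
      by auto
    then show ?thesis
      by (auto simp: comp_set_eq_image)
  qed
next
  fix s assume "s \<in> comp_set xs \<union> insert (sum_list xs) ((+) (sum_list xs) ` comp_set ys)"
  then consider k where "k \<in> {1..<length xs}" "s = partial_sum xs k"
    | "s = sum_list xs"
    | j where "j \<in> {1..<length ys}" "s = sum_list xs + partial_sum ys j"
    by (auto simp: comp_set_eq_image)
  then obtain k where "k \<in> {1..<length xs + length ys}" "s = partial_sum (xs @ ys) k"
  proof cases
    case (1 k)
    then show ?thesis
      using that[of k] by simp
  next
    case 2
    then show ?thesis
      using that[of "length xs"] assms by (simp add: Suc_leI)
  next
    case (3 j)
    then show ?thesis
      using that[of "length xs + j"] by simp
  qed
  then show "s \<in> comp_set (xs @ ys)"
    by (simp add: comp_set_eq_image)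
qed

lemma comp_set_snoc: "xs \<noteq> [] \<Longrightarrow> comp_set (xs @ [y]) = insert (sum_list xs) (comp_set xs)"
  using comp_set_append[of xs "[y]"] by (simp add: comp_set_eq_image[of "[y]"])
lemma comp_exists:
  assumes "finite I" "I \<subseteq> {1..<n}"
  shows "\<exists>\<gamma>. is_comp n \<gamma> \<and> comp_set \<gamma> = I"
  using assms
proof (induction I arbitrary: n rule: finite_linorder_max_induct)
  case empty
  show ?case
  proof (cases "n = 0")
    case True
    then show ?thesis
      by (intro exI[of _ "[]"]) (simp add: is_comp_def comp_set_def)
  next
    case False
    then show ?thesis
      by (intro exI[of _ "[n]"]) (simp add: is_comp_def comp_set_def)
  qed
next
  case (insert b I)
  then have "I \<subseteq> {1..<b}" and b: "1 \<le> b" "b < n"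
    by auto
  then obtain \<gamma> where \<gamma>: "is_comp b \<gamma>" "comp_set \<gamma> = I"
    using insert.IH by blast
  then have "\<gamma> \<noteq> []"
    using b by (auto simp: is_comp_def)
  then have "is_comp n (\<gamma> @ [n - b]) \<and> comp_set (\<gamma> @ [n - b]) = insert b I"
    using \<gamma> b by (auto simp: is_comp_def comp_set_snoc)
  then show ?case
    by blast
qed

lemma refines_if_comp_set_subset:
  assumes "is_comp n \<gamma>" "is_comp n \<beta>" "comp_set \<beta> \<subseteq> comp_set \<gamma>"
  shows "refines \<gamma> \<beta>"
  using assms
proof (induction \<beta> arbitrary: n \<gamma>)
  case Nil
  then have "\<gamma> = []"
    by (cases \<gamma>) (auto simp: is_comp_def)
  then show ?case
    by (simp add: refines_def)
next
  case (Cons b \<beta>')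
  show ?case
  proof (cases "\<beta>' = []")
    case True
    with Cons.prems have "\<gamma> \<noteq> []" "sum_list \<gamma> = b"
      by (auto simp: is_comp_def)
    with True show ?thesis
      unfolding refines_def by (intro exI[of _ "[\<gamma>]"]) simp
  next
    case False
    have comp_set_\<beta>: "comp_set (b # \<beta>') = insert b ((+) b ` comp_set \<beta>')"
      using comp_set_append[of "[b]" \<beta>'] False by (simp add: comp_set_eq_image[of "[b]"])
    then obtain k where k: "k \<in> {1..<length \<gamma>}" "partial_sum \<gamma> k = b"
      using Cons.prems(3) by (auto simp: comp_set_eq_image)
    define \<gamma>1 \<gamma>2 where "\<gamma>1 = take k \<gamma>" and "\<gamma>2 = drop k \<gamma>"
    have \<gamma>12: "\<gamma> = \<gamma>1 @ \<gamma>2" "\<gamma>1 \<noteq> []" "\<gamma>2 \<noteq> []" "sum_list \<gamma>1 = b"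
      using k by (auto simp: \<gamma>1_def \<gamma>2_def)
    have comps: "is_comp b \<gamma>1" "is_comp (n - b) \<gamma>2" "is_comp (n - b) \<beta>'"
      using Cons.prems(1,2) \<gamma>12 by (auto simp: is_comp_def)
    have "comp_set \<beta>' \<subseteq> comp_set \<gamma>2"
    proof
      fix s assume s: "s \<in> comp_set \<beta>'"
      then have "b + s \<in> comp_set \<gamma>"
        using Cons.prems(3) comp_set_\<beta> by auto
      moreover have "b + s \<notin> insert b (comp_set \<gamma>1)"
        using comp_set_subset[OF comps(1)] comp_set_subset[OF comps(3)] s by auto
      ultimately show "s \<in> comp_set \<gamma>2"
        using comp_set_append[OF \<gamma>12(2,3)] \<gamma>12(1,4) by auto
    qed
    then obtain xss where "concat xss = \<gamma>2" "\<forall>xs\<in>set xss. xs \<noteq> []" "map sum_list xss = \<beta>'"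
      using Cons.IH[OF comps(2,3)] by (auto simp: refines_def)
    then show ?thesis
      unfolding refines_def using \<gamma>12 by (intro exI[of _ "\<gamma>1 # xss"]) simp
  qed
qed

lemma finite_comps: "finite {\<gamma>. is_comp n \<gamma>}"
proof (rule finite_subset)
  show "{\<gamma>. is_comp n \<gamma>} \<subseteq> {xs. set xs \<subseteq> {0..n} \<and> length xs \<le> n}"
  proof clarify
    fix \<gamma> assume "is_comp n \<gamma>"
    then have pos: "\<forall>x\<in>set \<gamma>. 0 < x" and sum: "sum_list \<gamma> = n"
      by (auto simp: is_comp_def)
    have "length \<gamma> \<le> sum_list \<gamma>"
      using pos by (induction \<gamma>) auto
    then show "set \<gamma> \<subseteq> {0..n} \<and> length \<gamma> \<le> n"
      using sum member_le_sum_list by fastforce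
  qed
qed (rule finite_lists_length_le, simp)

section \<open>Labellings constant on the blocks of \<open>\<beta>\<close>\<close>

definition eta_maps :: "nat list \<Rightarrow> nat list \<Rightarrow> (nat \<Rightarrow> nat) set" where
  "eta_maps \<beta> \<alpha> = {f \<in> {0..<length \<beta>} \<rightarrow>\<^sub>E {0..<length \<alpha>}.
      \<forall>j<length \<alpha>. \<alpha> ! j = (\<Sum>i\<in>{i. i < length \<beta> \<and> f i = j}. \<beta> ! i)}"

lemma eta_map_labelling:
  assumes \<alpha>: "is_comp n \<alpha>" and \<beta>: "is_comp n \<beta>" and f: "f \<in> eta_maps \<beta> \<alpha>"
  shows "restrict (f \<circ> block_index (comp_set \<beta>)) {1..n} \<in>
    mackey_labellings n (block_index (comp_set \<alpha>)) (block_index (comp_set \<beta>))"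
proof -
  let ?a = "block_index (comp_set \<alpha>)" and ?b = "block_index (comp_set \<beta>)"
  have f_range: "f i < length \<alpha>" if "i < length \<beta>" for i
    using f that by (auto simp: eta_maps_def)
  have "restrict (f \<circ> ?b) {1..n} \<in> {1..n} \<rightarrow>\<^sub>E ?a ` {1..n}"
    using f_range block_index_comp_set_less[OF \<beta>] block_index_comp_set_image[OF \<alpha>] by auto
  moreover have "card {x \<in> {1..n}. restrict (f \<circ> ?b) {1..n} x = k} = card {x \<in> {1..n}. ?a x = k}" for k
  proof -
    have "card {x \<in> {1..n}. restrict (f \<circ> ?b) {1..n} x = k} = card {x \<in> {1..n}. f (?b x) = k}"
      by (auto intro!: arg_cong[where f = card])
    also have "\<dots> = (\<Sum>i\<in>{i. i < length \<beta> \<and> f i = k}. \<beta> ! i)"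
      by (rule card_block_index_preimage[OF \<beta>])
    also have "\<dots> = (if k < length \<alpha> then \<alpha> ! k else 0)"
    proof (cases "k < length \<alpha>")
      case True
      then show ?thesis
        using f by (simp add: eta_maps_def)
    next
      case False
      then have "{i. i < length \<beta> \<and> f i = k} = {}"
        using f_range by fastforce
      then show ?thesis
        using False by (simp only: sum.empty if_False)
    qed
    also have "\<dots> = card {x \<in> {1..n}. ?a x = k}"
      by (rule card_block_index_fibre_if[OF \<alpha>, symmetric])
    finally show ?thesis .
  qed
  moreover have "mono_on {1..n} (\<lambda>x. (?b x, restrict (f \<circ> ?b) {1..n} x))"
  proof (rule mono_onI)
    fix x y assume xy: "x \<in> {1..n}" "y \<in> {1..n}" "x \<le> y"
    have "?b x \<le> ?b y"
      using mono_block_index[OF finite_comp_set] xy(3) by (rule monoD)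
    then show "(?b x, restrict (f \<circ> ?b) {1..n} x) \<le> (?b y, restrict (f \<circ> ?b) {1..n} y)"
      using xy by (cases "?b x = ?b y") auto
  qed
  ultimately show ?thesis
    by (simp add: mackey_labellings_def)
qed

lemma mackey_labelling_factors:
  assumes \<alpha>: "is_comp n \<alpha>" and \<beta>: "is_comp n \<beta>"
    and g: "g \<in> mackey_labellings n (block_index (comp_set \<alpha>)) (block_index (comp_set \<beta>))"
    and g_const: "\<forall>x\<in>{1..n}. \<forall>y\<in>{1..n}. block_index (comp_set \<beta>) x = block_index (comp_set \<beta>) y \<longrightarrow> g x = g y"
  shows "\<exists>f\<in>eta_maps \<beta> \<alpha>. g = restrict (f \<circ> block_index (comp_set \<beta>)) {1..n}"
proof -
  let ?a = "block_index (comp_set \<alpha>)" and ?b = "block_index (comp_set \<beta>)"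
  have g_range: "g \<in> {1..n} \<rightarrow>\<^sub>E {0..<length \<alpha>}"
    using g block_index_comp_set_image[OF \<alpha>] by (simp add: mackey_labellings_def)
  obtain f0 where f0: "\<And>x. x \<in> {1..n} \<Longrightarrow> g x = f0 (?b x)"
    using factor_through_fibres[OF g_const] by blast
  define f where "f = restrict f0 {0..<length \<beta>}"
  have g_eq: "g = restrict (f \<circ> ?b) {1..n}"
  proof
    fix x
    show "g x = restrict (f \<circ> ?b) {1..n} x"
      using f0[of x] block_index_comp_set_less[OF \<beta>, of x] PiE_arb[OF g_range, of x]
      by (cases "x \<in> {1..n}") (simp_all add: f_def)
  qed
  have "f \<in> {0..<length \<beta>} \<rightarrow>\<^sub>E {0..<length \<alpha>}"
  proof -
    have "f0 i \<in> {0..<length \<alpha>}" if "i \<in> ?b ` {1..n}" for i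
      using that f0 PiE_mem[OF g_range] by auto
    then show ?thesis
      unfolding f_def block_index_comp_set_image[OF \<beta>, symmetric] by auto
  qed
  moreover have "\<alpha> ! k = (\<Sum>i\<in>{i. i < length \<beta> \<and> f i = k}. \<beta> ! i)" if "k < length \<alpha>" for k
  proof -
    have "\<alpha> ! k = card {x \<in> {1..n}. ?a x = k}"
      by (rule card_block_index_fibre[OF \<alpha> that, symmetric])
    also have "\<dots> = card {x \<in> {1..n}. g x = k}"
      using g by (simp add: mackey_labellings_def)
    also have "{x \<in> {1..n}. g x = k} = {x \<in> {1..n}. f (?b x) = k}"
      using fun_cong[OF g_eq] by auto
    also have "card \<dots> = (\<Sum>i\<in>{i. i < length \<beta> \<and> f i = k}. \<beta> ! i)"
      by (rule card_block_index_preimage[OF \<beta>])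
    finally show ?thesis .
  qed
  ultimately show ?thesis
    using g_eq unfolding eta_maps_def by blast
qed

lemma card_mackey_labellings_const_on_blocks:
  assumes \<alpha>: "is_comp n \<alpha>" and \<beta>: "is_comp n \<beta>"
  shows "card {g \<in> mackey_labellings n (block_index (comp_set \<alpha>)) (block_index (comp_set \<beta>)).
      \<forall>x\<in>{1..n}. \<forall>y\<in>{1..n}. block_index (comp_set \<beta>) x = block_index (comp_set \<beta>) y \<longrightarrow> g x = g y}
    = eta \<beta> \<alpha>"
proof -
  let ?b = "block_index (comp_set \<beta>)"
  let ?G = "{g \<in> mackey_labellings n (block_index (comp_set \<alpha>)) ?b.
      \<forall>x\<in>{1..n}. \<forall>y\<in>{1..n}. ?b x = ?b y \<longrightarrow> g x = g y}"
  have "bij_betw (\<lambda>f. restrict (f \<circ> ?b) {1..n}) (eta_maps \<beta> \<alpha>) ?G"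
  proof (rule bij_betw_imageI)
    show "inj_on (\<lambda>f. restrict (f \<circ> ?b) {1..n}) (eta_maps \<beta> \<alpha>)"
    proof (rule inj_onI)
      fix f f' assume "f \<in> eta_maps \<beta> \<alpha>" "f' \<in> eta_maps \<beta> \<alpha>"
        and eq: "restrict (f \<circ> ?b) {1..n} = restrict (f' \<circ> ?b) {1..n}"
      then have "f \<in> extensional (?b ` {1..n})" "f' \<in> extensional (?b ` {1..n})"
        unfolding block_index_comp_set_image[OF \<beta>] by (auto simp: eta_maps_def PiE_def)
      moreover have "f i = f' i" if i: "i \<in> ?b ` {1..n}" for i
      proof -
        obtain x where "x \<in> {1..n}" "i = ?b x"
          using i by blast
        then show ?thesis
          using fun_cong[OF eq, of x] by simp
      qed
      ultimately show "f = f'"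
        by (rule extensionalityI)
    qed
    show "(\<lambda>f. restrict (f \<circ> ?b) {1..n}) ` eta_maps \<beta> \<alpha> = ?G"
    proof
      show "(\<lambda>f. restrict (f \<circ> ?b) {1..n}) ` eta_maps \<beta> \<alpha> \<subseteq> ?G"
        using eta_map_labelling[OF \<alpha> \<beta>] by auto
      show "?G \<subseteq> (\<lambda>f. restrict (f \<circ> ?b) {1..n}) ` eta_maps \<beta> \<alpha>"
      proof
        fix g assume "g \<in> ?G"
        then obtain f where "f \<in> eta_maps \<beta> \<alpha>" "g = restrict (f \<circ> ?b) {1..n}"
          using mackey_labelling_factors[OF \<alpha> \<beta>] by blast
        then show "g \<in> (\<lambda>f. restrict (f \<circ> ?b) {1..n}) ` eta_maps \<beta> \<alpha>"
          by blast
      qed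
    qed
  qed
  then show ?thesis
    by (simp add: bij_betw_same_card eta_def eta_maps_def)
qed

lemma sum_BI_strict_supersets:
  fixes K :: "'i \<Rightarrow> nat set"
  assumes \<beta>: "is_comp n \<beta>" and A: "finite A"
    and K: "\<And>x. x \<in> A \<Longrightarrow> comp_set \<beta> \<subset> K x \<and> K x \<subseteq> {1..<n}"
  shows "\<exists>N. \<forall>w. (\<Sum>x\<in>A. BI n (K x) w :: 'k::comm_ring_1) =
    (\<Sum>\<gamma>\<in>{\<gamma>. is_comp n \<gamma> \<and> strictly_refines \<gamma> \<beta>}. of_nat (N \<gamma>) * Bc n \<gamma> w)"
proof -
  let ?S = "{\<gamma>. is_comp n \<gamma> \<and> strictly_refines \<gamma> \<beta>}"
  define comp_of where "comp_of x = (SOME \<gamma>. is_comp n \<gamma> \<and> comp_set \<gamma> = K x)" for x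
  have comp_of: "is_comp n (comp_of x) \<and> comp_set (comp_of x) = K x" if "x \<in> A" for x
    unfolding comp_of_def
    by (rule someI_ex, rule comp_exists) (use K[OF that] finite_subset in auto)
  have comp_of_in: "comp_of x \<in> ?S" if "x \<in> A" for x
    using comp_of[OF that] K[OF that] refines_if_comp_set_subset[OF _ \<beta>, of "comp_of x"]
    by (auto simp: strictly_refines_def)
  have "(\<Sum>x\<in>A. BI n (K x) w :: 'k) = (\<Sum>\<gamma>\<in>?S. \<Sum>x\<in>{x \<in> A. comp_of x = \<gamma>}. BI n (K x) w)" for w
    using comp_of_in by (intro sum.group[symmetric] A finite_subset[OF _ finite_comps[of n]]) auto
  also have "\<dots> w = (\<Sum>\<gamma>\<in>?S. of_nat (card {x \<in> A. comp_of x = \<gamma>}) * Bc n \<gamma> w)" for w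
  proof (intro sum.cong refl)
    fix \<gamma>
    have "(\<Sum>x\<in>{x \<in> A. comp_of x = \<gamma>}. BI n (K x) w :: 'k) =
        (\<Sum>x\<in>{x \<in> A. comp_of x = \<gamma>}. Bc n \<gamma> w)"
      using comp_of by (intro sum.cong) (auto simp: Bc_def)
    then show "(\<Sum>x\<in>{x \<in> A. comp_of x = \<gamma>}. BI n (K x) w :: 'k) =
        of_nat (card {x \<in> A. comp_of x = \<gamma>}) * Bc n \<gamma> w"
      by simp
  qed
  finally show ?thesis
    by (intro exI[of _ "\<lambda>\<gamma>. card {x \<in> A. comp_of x = \<gamma>}"] allI)
qed

lemma card_mackey_labellings_steps_eq:
  assumes \<alpha>: "is_comp n \<alpha>" and \<beta>: "is_comp n \<beta>"
  shows "card {g \<in> mackey_labellings n (block_index (comp_set \<alpha>)) (block_index (comp_set \<beta>)).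
      steps n (\<lambda>x. (block_index (comp_set \<beta>) x, g x)) = comp_set \<beta>} = eta \<beta> \<alpha>"
proof -
  let ?b = "block_index (comp_set \<beta>)"
  have steps_b: "steps n ?b = comp_set \<beta>"
    by (rule steps_block_index[OF finite_comp_set comp_set_subset[OF \<beta>]])
  have "steps n (\<lambda>x. (?b x, g x)) = comp_set \<beta> \<longleftrightarrow>
      (\<forall>x\<in>{1..n}. \<forall>y\<in>{1..n}. ?b x = ?b y \<longrightarrow> g x = g y)" for g :: "nat \<Rightarrow> nat"
    using steps_pair_eq_iff[OF mono_on_block_index, of n \<beta> g] unfolding steps_b .
  then show ?thesis
    unfolding card_mackey_labellings_const_on_blocks[OF \<alpha> \<beta>, symmetric] by (simp only:)
qed

lemma Bc_mult_Bc:
  assumes \<alpha>: "is_comp n \<alpha>" and \<beta>: "is_comp n \<beta>"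
  shows "\<exists>N. \<forall>w. (amult n (Bc n \<alpha>) (Bc n \<beta>) w :: 'k::comm_ring_1) =
    of_nat (eta \<beta> \<alpha>) * Bc n \<beta> w +
    (\<Sum>\<gamma>\<in>{\<gamma>. is_comp n \<gamma> \<and> strictly_refines \<gamma> \<beta>}. of_nat (N \<gamma>) * Bc n \<gamma> w)"
proof -
  let ?a = "block_index (comp_set \<alpha>)" and ?b = "block_index (comp_set \<beta>)"
  let ?G = "mackey_labellings n ?a ?b" and ?K = "\<lambda>g. steps n (\<lambda>x. (?b x, g x))"
  let ?Gc = "{g \<in> ?G. ?K g = comp_set \<beta>}"
  have Gc_sum: "(\<Sum>g\<in>?Gc. BI n (?K g) w :: 'k) = of_nat (eta \<beta> \<alpha>) * Bc n \<beta> w" for w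
  proof -
    have "(\<Sum>g\<in>?Gc. BI n (?K g) w :: 'k) = (\<Sum>g\<in>?Gc. Bc n \<beta> w)"
      by (intro sum.cong) (auto simp: Bc_def)
    then show ?thesis
      by (simp add: card_mackey_labellings_steps_eq[OF \<alpha> \<beta>])
  qed
  have fin: "finite (?G - ?Gc)"
    using finite_mackey_labellings by (rule finite_Diff)
  have K_sub: "comp_set \<beta> \<subset> ?K g \<and> ?K g \<subseteq> {1..<n}" if "g \<in> ?G - ?Gc" for g
  proof -
    have "steps n ?b \<subseteq> ?K g" "?K g \<subseteq> {1..<n}"
      by (auto simp: steps_def)
    with that show ?thesis
      unfolding steps_block_index[OF finite_comp_set comp_set_subset[OF \<beta>]] by blast
  qed
  obtain N where rest_sum: "\<forall>w. (\<Sum>g\<in>?G - ?Gc. BI n (?K g) w :: 'k) =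
      (\<Sum>\<gamma>\<in>{\<gamma>. is_comp n \<gamma> \<and> strictly_refines \<gamma> \<beta>}. of_nat (N \<gamma>) * Bc n \<gamma> w)"
    using sum_BI_strict_supersets[where K = ?K, OF \<beta> fin K_sub] by blast
  show ?thesis
  proof (intro exI[of _ N] allI)
    fix w
    have "(amult n (Bc n \<alpha>) (Bc n \<beta>) w :: 'k) = (\<Sum>g\<in>?G. BI n (?K g) w)"
      unfolding Bc_eq_BI_steps[OF \<alpha>] Bc_eq_BI_steps[OF \<beta>]
        BI_steps_mult_BI_steps[OF mono_on_block_index mono_on_block_index] ..
    also have "\<dots> = (\<Sum>g\<in>?Gc. BI n (?K g) w) + (\<Sum>g\<in>?G - ?Gc. BI n (?K g) w)"
      by (rule trans[OF sum.subset_diff[OF _ finite_mackey_labellings] add.commute]) blast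
    finally show "(amult n (Bc n \<alpha>) (Bc n \<beta>) w :: 'k) = of_nat (eta \<beta> \<alpha>) * Bc n \<beta> w +
        (\<Sum>\<gamma>\<in>{\<gamma>. is_comp n \<gamma> \<and> strictly_refines \<gamma> \<beta>}. of_nat (N \<gamma>) * Bc n \<gamma> w)"
      unfolding Gc_sum rest_sum[rule_format] .
  qed
qed

theorem theorem2p8:
  fixes n :: nat and \<alpha> \<beta> :: "nat list" and a :: "(nat \<Rightarrow> nat) \<Rightarrow> 'k::comm_ring_1"
  assumes "is_comp n \<alpha>" and "is_comp n \<beta>" and "alg_elem n a"
  shows "\<exists>c :: nat list \<Rightarrow> (nat \<Rightarrow> nat) \<Rightarrow> 'k.
           (\<forall>\<gamma>. alg_elem n (c \<gamma>)) \<and>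
           (\<lambda>w. amult n (Bc n \<alpha>) (amult n (Bc n \<beta>) a) w
                 - of_nat (eta \<beta> \<alpha>) * amult n (Bc n \<beta>) a w)
           = (\<lambda>w. \<Sum>\<gamma>\<in>{\<gamma>. is_comp n \<gamma> \<and> strictly_refines \<gamma> \<beta>}. amult n (Bc n \<gamma>) (c \<gamma>) w)"
proof -
  let ?S = "{\<gamma>. is_comp n \<gamma> \<and> strictly_refines \<gamma> \<beta>}"
  obtain N where N: "\<forall>w. (amult n (Bc n \<alpha>) (Bc n \<beta>) w :: 'k) =
      of_nat (eta \<beta> \<alpha>) * Bc n \<beta> w + (\<Sum>\<gamma>\<in>?S. of_nat (N \<gamma>) * Bc n \<gamma> w)"
    using Bc_mult_Bc[OF assms(1,2)] by blast
  define c where "c \<gamma> w = of_nat (N \<gamma>) * a w" for \<gamma> w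
  have "finite ?S"
    using finite_comps[of n] by (rule finite_subset[rotated]) auto
  then have "amult n (Bc n \<alpha>) (amult n (Bc n \<beta>) a) =
      (\<lambda>w. of_nat (eta \<beta> \<alpha>) * amult n (Bc n \<beta>) a w + (\<Sum>\<gamma>\<in>?S. amult n (Bc n \<gamma>) (c \<gamma>) w))"
    unfolding amult_assoc[symmetric] N[rule_format, abs_def] c_def
    by (simp add: amult_add_left amult_scale_left amult_sum_left amult_scale_right)
  moreover have "alg_elem n (c \<gamma>)" for \<gamma>
    using assms(3) by (simp add: alg_elem_def c_def)
  ultimately show ?thesis
    by (intro exI[of _ c]) auto
qed

end
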